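(* Let $\Gamma$ be an inseparable weighted oriented graph with $n\geq 5$ vertices. Then there is a vertex $v$ of $\Gamma$ such that the induced weighted oriented graph $\Gamma[V\setminus\{v\}]$ on $n-1$ vertices is inseparable.
   Context: A weighted oriented graph $\Gamma$ with finite vertex set $V$ consists of a set of arcs, i.e. ordered pairs $(x,y)$ of distinct vertices, such that for any distinct $x,y$ at most one of $(x,y),(y,x)$ is an arc, each arc carrying a weight in $(1/2,1]$. For $Z\subseteq V$, $\Gamma[Z]$ is the induced weighted oriented graph on $Z$. A clan of $\Gamma$ is a subset $X\subseteq V$ such that for every $x\in V\setminus X$, one of the following holds: there is no arc between $x$ and any vertex of $X$; or for some weight $\alpha$, $(x,y)$ is an arc of weight $\alpha$ for all $y\in X$; or for some weight $\alpha$, $(y,x)$ is an arc of weight $\alpha$ for all $y\in X$. $\Gamma$ is separable if $V$ can be partitioned into two nonempty clans, and inseparable otherwise. *)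

theory Defs
  imports Main "HOL.Real"
begin

text \<open>A weighted oriented graph on vertex set V is encoded by a weight function
  w :: 'a => 'a => real, where (x,y) is an arc iff w x y \<noteq> 0, and then w x y is its weight.\<close>

definition wog :: "'a set \<Rightarrow> ('a \<Rightarrow> 'a \<Rightarrow> real) \<Rightarrow> bool" where
  "wog V w \<longleftrightarrow> finite V \<and>
     (\<forall>x y. w x y \<noteq> 0 \<longrightarrow> x \<in> V \<and> y \<in> V \<and> x \<noteq> y \<and> 1/2 < w x y \<and> w x y \<le> 1 \<and> w y x = 0)"

definition induced :: "'a set \<Rightarrow> ('a \<Rightarrow> 'a \<Rightarrow> real) \<Rightarrow> ('a \<Rightarrow> 'a \<Rightarrow> real)" where
  "induced Z w = (\<lambda>x y. if x \<in> Z \<and> y \<in> Z then w x y else 0)"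

definition clan :: "'a set \<Rightarrow> ('a \<Rightarrow> 'a \<Rightarrow> real) \<Rightarrow> 'a set \<Rightarrow> bool" where
  "clan V w X \<longleftrightarrow> X \<subseteq> V \<and>
     (\<forall>x \<in> V - X.
        (\<forall>y \<in> X. w x y = 0 \<and> w y x = 0) \<or>
        (\<exists>\<alpha>. \<alpha> \<noteq> 0 \<and> (\<forall>y \<in> X. w x y = \<alpha>)) \<or>
        (\<exists>\<alpha>. \<alpha> \<noteq> 0 \<and> (\<forall>y \<in> X. w y x = \<alpha>)))"

definition separable :: "'a set \<Rightarrow> ('a \<Rightarrow> 'a \<Rightarrow> real) \<Rightarrow> bool" where
  "separable V w \<longleftrightarrow> (\<exists>X Y. X \<noteq> {} \<and> Y \<noteq> {} \<and> X \<inter> Y = {} \<and> X \<union> Y = V \<and>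
                         clan V w X \<and> clan V w Y)"

definition inseparable :: "'a set \<Rightarrow> ('a \<Rightarrow> 'a \<Rightarrow> real) \<Rightarrow> bool" where
  "inseparable V w \<longleftrightarrow> \<not> separable V w"

end

theory Submission
  imports Defs
begin

text \<open>
  In an oriented graph a clan is a set that every
  outside vertex sees with one and the same link, so \<open>V\<close> is separable iff it splits into
  nonempty parts \<open>X\<close>, \<open>Y\<close> with constant link from \<open>X\<close> to \<open>Y\<close>; the argument is about this
  notion of splitting and works for arbitrary weights.

  Let \<open>V\<close> be unsplittable and let \<open>V - {v}\<close> split as \<open>X\<close>, \<open>Y\<close> with link \<open>l\<close>. As \<open>V\<close> does
  not split, \<open>v\<close> sees some vertex of \<open>X\<close> and some vertex of \<open>Y\<close> with a link other than \<open>l\<close>,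
  and a case analysis on these links yields an unsplittable set of three or four vertices.
  Grow such a set \<open>T\<close> one vertex at a time while it stays unsplittable. Either it reaches
  some \<open>V - {u}\<close>, or every vertex outside \<open>T\<close> sees \<open>T\<close> uniformly; then \<open>T\<close> is a module
  with at least two vertices, and deleting one vertex of such a module from \<open>V\<close> cannot
  create a split: moving the whole module, deleted vertex included, to a side that meets it
  would split \<open>V\<close>. When \<open>|V| \<ge> 5\<close> the small set is proper, so one of the two cases applies.
\<close>

definition link :: "('a \<Rightarrow> 'a \<Rightarrow> 'b) \<Rightarrow> 'a \<Rightarrow> 'a \<Rightarrow> 'b \<times> 'b" where
  "link w x y = (w x y, w y x)"

definition uniform :: "('a \<Rightarrow> 'a \<Rightarrow> 'b) \<Rightarrow> 'a set \<Rightarrow> 'a set \<Rightarrow> bool" where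
  "uniform w X Y \<longleftrightarrow> (\<exists>l. \<forall>x\<in>X. \<forall>y\<in>Y. link w x y = l)"

definition splittable :: "('a \<Rightarrow> 'a \<Rightarrow> 'b) \<Rightarrow> 'a set \<Rightarrow> bool" where
  "splittable w Z \<longleftrightarrow> (\<exists>X Y. X \<noteq> {} \<and> Y \<noteq> {} \<and> X \<inter> Y = {} \<and> X \<union> Y = Z \<and> uniform w X Y)"

lemma uniform_iff:
  "uniform w X Y \<longleftrightarrow> (\<forall>x\<in>X. \<forall>y\<in>Y. \<forall>x'\<in>X. \<forall>y'\<in>Y. link w x y = link w x' y')"
proof
  assume "\<forall>x\<in>X. \<forall>y\<in>Y. \<forall>x'\<in>X. \<forall>y'\<in>Y. link w x y = link w x' y'"
  then show "uniform w X Y"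
    unfolding uniform_def by (cases "X \<times> Y = {}") blast+
qed (auto simp: uniform_def)

lemma uniformI: "(\<And>x y. x \<in> X \<Longrightarrow> y \<in> Y \<Longrightarrow> link w x y = l) \<Longrightarrow> uniform w X Y"
  unfolding uniform_def by blast

lemma uniformD:
  assumes "uniform w X Y" "x \<in> X" "y \<in> Y" "x' \<in> X" "y' \<in> Y"
  shows "link w x y = link w x' y'"
  using assms unfolding uniform_def by (elim exE) simp

lemma uniform_sym: "uniform w X Y \<longleftrightarrow> uniform w Y X"
  unfolding uniform_iff link_def by blast

lemma uniform_mono: "uniform w X Y \<Longrightarrow> X' \<subseteq> X \<Longrightarrow> Y' \<subseteq> Y \<Longrightarrow> uniform w X' Y'"
  unfolding uniform_iff by blast

lemma uniform_pointwise:
  "uniform w X Y \<longleftrightarrow> (\<forall>x\<in>X. uniform w {x} Y) \<and> (\<forall>y\<in>Y. uniform w {y} X)"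
proof (intro iffI conjI ballI)
  fix x assume "uniform w X Y" "x \<in> X"
  then show "uniform w {x} Y" using uniform_mono by blast
next
  fix y assume "uniform w X Y" "y \<in> Y"
  then show "uniform w {y} X" using uniform_mono uniform_sym by blast
next
  assume pointwise: "(\<forall>x\<in>X. uniform w {x} Y) \<and> (\<forall>y\<in>Y. uniform w {y} X)"
  show "uniform w X Y"
    unfolding uniform_iff
  proof (intro ballI)
    fix x y x' y' assume "x \<in> X" "y \<in> Y" "x' \<in> X" "y' \<in> Y"
    then have "link w x y = link w x y'" "link w y' x = link w y' x'"
      using pointwise by (auto intro: uniformD)
    then show "link w x y = link w x' y'" by (simp add: link_def)
  qed
qed

lemma uniform_Un_module:
  assumes XY: "uniform w X Y" and x: "x \<in> X" "x \<in> S" and S: "\<forall>y\<in>Y. uniform w {y} S"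
  shows "uniform w (X \<union> S) Y"
proof -
  have "link w s y = link w x y" if "s \<in> S" "y \<in> Y" for s y
  proof -
    have "link w y s = link w y x" using S x that unfolding uniform_iff by blast
    then show ?thesis by (simp add: link_def)
  qed
  then show ?thesis
    using XY x unfolding uniform_iff by (metis Un_iff)
qed

lemma uniform_cong:
  assumes "\<And>x y. x \<in> X \<Longrightarrow> y \<in> Y \<Longrightarrow> link w' x y = link w x y"
  shows "uniform w' X Y \<longleftrightarrow> uniform w X Y"
  unfolding uniform_iff using assms by (intro ball_cong refl) presburger

lemma splittableI:
  "P \<subseteq> Z \<Longrightarrow> P \<noteq> {} \<Longrightarrow> Z - P \<noteq> {} \<Longrightarrow> uniform w P (Z - P) \<Longrightarrow> splittable w Z"
  unfolding splittable_def by (intro exI[of _ P] exI[of _ "Z - P"]) auto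

lemma splittableE:
  assumes "splittable w Z"
  obtains X where "X \<subseteq> Z" "X \<noteq> {}" "Z - X \<noteq> {}" "uniform w X (Z - X)"
proof -
  obtain X Y where XY: "X \<noteq> {}" "Y \<noteq> {}" "X \<inter> Y = {}" "X \<union> Y = Z" "uniform w X Y"
    using assms unfolding splittable_def by blast
  then have "Z - X = Y" by blast
  with XY show thesis by (intro that[of X]) auto
qed

lemma splittable_with_side:
  assumes "splittable w Z" "z \<in> Z"
  obtains P Q where "z \<in> P" "Q \<noteq> {}" "P \<inter> Q = {}" "P \<union> Q = Z" "uniform w P Q"
proof -
  obtain X Y where XY: "X \<noteq> {}" "Y \<noteq> {}" "X \<inter> Y = {}" "X \<union> Y = Z" "uniform w X Y"
    using assms(1) unfolding splittable_def by blast
  show thesis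
  proof (cases "z \<in> X")
    case True
    then show thesis using XY that by blast
  next
    case False
    then have "z \<in> Y" using XY assms(2) by blast
    moreover have "uniform w Y X" using XY(5) by (rule uniform_sym[THEN iffD1])
    ultimately show thesis using XY that[of Y X] by blast
  qed
qed

lemma uniform_complement_link_eq:
  assumes XZ: "uniform w X (Z - X)" and in_Z: "{u, t, u', t'} \<subseteq> Z"
    and sides: "u \<in> X \<longleftrightarrow> u' \<in> X" "t \<in> X \<longleftrightarrow> t' \<in> X" "u \<in> X \<longleftrightarrow> t \<notin> X"
  shows "link w u t = link w u' t'"
proof (cases "u \<in> X")
  case True
  then have "u \<in> X" "t \<in> Z - X" "u' \<in> X" "t' \<in> Z - X" using in_Z sides by blast+
  then show ?thesis by (rule uniformD[OF XZ])
next
  case False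
  have ZX: "uniform w (Z - X) X" using XZ by (rule uniform_sym[THEN iffD1])
  from False have "u \<in> Z - X" "t \<in> X" "u' \<in> Z - X" "t' \<in> X" using in_Z sides by blast+
  then show ?thesis by (rule uniformD[OF ZX])
qed

lemma splittable_transpose: "splittable (\<lambda>x y. w y x) Z \<longleftrightarrow> splittable w Z"
proof -
  have "link (\<lambda>x y. w y x) x y = link (\<lambda>x y. w y x) x' y' \<longleftrightarrow> link w x y = link w x' y'"
    for x y x' y' by (auto simp: link_def)
  then have "uniform (\<lambda>x y. w y x) X Y \<longleftrightarrow> uniform w X Y" for X Y
    unfolding uniform_iff by presburger
  then show ?thesis unfolding splittable_def by presburger
qed

lemma splittable_induced: "splittable (induced Z w) Z \<longleftrightarrow> splittable w Z"
proof -
  have "uniform (induced Z w) X Y \<longleftrightarrow> uniform w X Y" if "X \<union> Y = Z" for X Y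
    using that by (intro uniform_cong) (auto simp: link_def induced_def)
  then show ?thesis unfolding splittable_def by blast
qed

lemma uniform_singleton_iff: "uniform w {z} X \<longleftrightarrow> (\<exists>p q. \<forall>y\<in>X. w z y = p \<and> w y z = q)"
  by (simp add: uniform_def link_def)

lemma clan_iff_uniform:
  assumes antisym: "\<And>x y. w x y \<noteq> 0 \<Longrightarrow> w y x = 0"
  shows "clan Z w X \<longleftrightarrow> X \<subseteq> Z \<and> (\<forall>z\<in>Z - X. uniform w {z} X)"
proof -
  have pointwise: "(\<forall>y\<in>X. w z y = 0 \<and> w y z = 0) \<or> (\<exists>\<alpha>. \<alpha> \<noteq> 0 \<and> (\<forall>y\<in>X. w z y = \<alpha>)) \<or>
          (\<exists>\<alpha>. \<alpha> \<noteq> 0 \<and> (\<forall>y\<in>X. w y z = \<alpha>))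
        \<longleftrightarrow> (\<exists>p q. \<forall>y\<in>X. w z y = p \<and> w y z = q)" (is "?clan \<longleftrightarrow> ?uniform")
    for z
  proof
    assume ?clan
    then consider "\<forall>y\<in>X. w z y = 0 \<and> w y z = 0"
      | \<alpha> where "\<alpha> \<noteq> 0" "\<forall>y\<in>X. w z y = \<alpha>" | \<alpha> where "\<alpha> \<noteq> 0" "\<forall>y\<in>X. w y z = \<alpha>"
      by blast
    then show ?uniform
    proof cases
      case 1
      then show ?thesis by blast
    next
      case (2 \<alpha>)
      then have "\<forall>y\<in>X. w z y = \<alpha> \<and> w y z = 0" using antisym by fastforce
      then show ?thesis by blast
    next
      case (3 \<alpha>)
      then have "\<forall>y\<in>X. w z y = 0 \<and> w y z = \<alpha>" using antisym by fastforce
      then show ?thesis by blast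
    qed
  next
    assume ?uniform
    then obtain p q where "\<forall>y\<in>X. w z y = p \<and> w y z = q" by blast
    then show ?clan by (cases "p = 0"; cases "q = 0") auto
  qed
  show ?thesis unfolding clan_def uniform_singleton_iff pointwise ..
qed

lemma separable_iff_splittable:
  assumes antisym: "\<And>x y. w x y \<noteq> 0 \<Longrightarrow> w y x = 0"
  shows "separable Z w \<longleftrightarrow> splittable w Z"
proof -
  have "clan Z w X \<and> clan Z w Y \<longleftrightarrow> uniform w X Y"
    if "X \<inter> Y = {}" "X \<union> Y = Z" for X Y
  proof -
    have "Z - X = Y" "Z - Y = X" using that by auto
    then show ?thesis
      using that by (auto simp: clan_iff_uniform[OF antisym] uniform_pointwise[of w X Y])
  qed
  then show ?thesis unfolding separable_def splittable_def by blast
qed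

lemma not_splittable_triple:
  assumes "link w x y = l" "link w x v \<noteq> l" "link w v y \<noteq> l" "link w v x \<noteq> link w v y"
  shows "\<not> splittable w {x, v, y}"
proof
  assume "splittable w {x, v, y}"
  then obtain X where X: "X \<subseteq> {x, v, y}" "X \<noteq> {}" "{x, v, y} - X \<noteq> {}"
    and uniform: "uniform w X ({x, v, y} - X)"
    by (rule splittableE)
  note same = uniform_complement_link_eq[OF uniform]
  \<comment> \<open>each fact excludes the splits across which two pairs with different links both run\<close>
  have "\<not> ((v \<in> X \<longleftrightarrow> y \<in> X) \<and> (x \<in> X \<longleftrightarrow> v \<notin> X))" using same[of x v x y] assms by auto
  moreover have "\<not> ((x \<in> X \<longleftrightarrow> v \<in> X) \<and> (x \<in> X \<longleftrightarrow> y \<notin> X))" using same[of x y v y] assms by auto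
  moreover have "\<not> ((x \<in> X \<longleftrightarrow> y \<in> X) \<and> (v \<in> X \<longleftrightarrow> x \<notin> X))" using same[of v x v y] assms by auto
  moreover have "x \<in> X \<or> v \<in> X \<or> y \<in> X" "x \<notin> X \<or> v \<notin> X \<or> y \<notin> X" using X by blast+
  ultimately show False by blast
qed

lemma not_splittable_quadruple:
  assumes "link w a y = l" "link w e y = l" "link w e v = l"
    and "link w a v \<noteq> l" "link w v y \<noteq> l" "link w e a \<noteq> l"
  shows "\<not> splittable w {a, y, v, e}"
proof
  assume "splittable w {a, y, v, e}"
  then obtain X where X: "X \<subseteq> {a, y, v, e}" "X \<noteq> {}" "{a, y, v, e} - X \<noteq> {}"
    and uniform: "uniform w X ({a, y, v, e} - X)"
    by (rule splittableE)
  note same = uniform_complement_link_eq[OF uniform]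
  have "\<not> ((y \<in> X \<longleftrightarrow> v \<in> X) \<and> (a \<in> X \<longleftrightarrow> y \<notin> X))" using same[of a y a v] assms by auto
  moreover have "\<not> ((a \<in> X \<longleftrightarrow> v \<in> X) \<and> (a \<in> X \<longleftrightarrow> y \<notin> X))" using same[of a y v y] assms by auto
  moreover have "\<not> ((e \<in> X \<longleftrightarrow> a \<in> X) \<and> (e \<in> X \<longleftrightarrow> v \<notin> X))" using same[of e v a v] assms by auto
  moreover have "\<not> ((y \<in> X \<longleftrightarrow> a \<in> X) \<and> (e \<in> X \<longleftrightarrow> y \<notin> X))" using same[of e y e a] assms by auto
  moreover have "\<not> ((e \<in> X \<longleftrightarrow> v \<in> X) \<and> (e \<in> X \<longleftrightarrow> y \<notin> X))" using same[of e y v y] assms by auto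
  moreover have "a \<in> X \<or> y \<in> X \<or> v \<in> X \<or> e \<in> X" "a \<notin> X \<or> y \<notin> X \<or> v \<notin> X \<or> e \<notin> X"
    using X by blast+
  ultimately show False by blast
qed

locale vertex_deletion_split =
  fixes w :: "'a \<Rightarrow> 'a \<Rightarrow> 'b" and V X Y :: "'a set" and v :: 'a and l :: "'b \<times> 'b"
  assumes V_eq: "V = insert v (X \<union> Y)" and v_notin: "v \<notin> X" "v \<notin> Y" and disjoint: "X \<inter> Y = {}"
    and X_nonempty: "X \<noteq> {}" and Y_nonempty: "Y \<noteq> {}"
    and link_XY: "\<And>x y. x \<in> X \<Longrightarrow> y \<in> Y \<Longrightarrow> link w x y = l"
    and unsplittable: "\<not> splittable w V"
begin

lemma transpose: "vertex_deletion_split (\<lambda>x y. w y x) V Y X v l"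
proof
  show "V = insert v (Y \<union> X)" using V_eq by blast
  show "v \<notin> Y" "v \<notin> X" "Y \<inter> X = {}" "Y \<noteq> {}" "X \<noteq> {}"
    using v_notin disjoint X_nonempty Y_nonempty by blast+
  show "link (\<lambda>x y. w y x) y x = l" if "y \<in> Y" "x \<in> X" for y x
    using link_XY[OF that(2,1)] by (simp add: link_def)
  show "\<not> splittable (\<lambda>x y. w y x) V" using unsplittable splittable_transpose[of w V] by blast
qed

lemma unsplittable_quadruple:
  assumes e: "e \<in> X" "link w e v = l"
  shows "\<exists>T\<subseteq>V. \<not> splittable w T \<and> card T = 4"
proof -
  have "\<exists>y\<in>Y. link w v y \<noteq> l"
  proof (rule ccontr)
    assume "\<not> (\<exists>y\<in>Y. link w v y \<noteq> l)"
    with link_XY have "uniform w (insert v X) Y" by (auto intro: uniformI)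
    moreover have "V - insert v X = Y" using V_eq v_notin disjoint by blast
    ultimately have "splittable w V"
      using V_eq Y_nonempty by (intro splittableI[of "insert v X"]) auto
    with unsplittable show False ..
  qed
  then obtain y where y: "y \<in> Y" "link w v y \<noteq> l" by blast
  define E where "E = {x\<in>X. link w x v = l}"
  show ?thesis
  proof (cases "\<exists>e'\<in>E. \<exists>a\<in>X - E. link w e' a \<noteq> l")
    case True
    then obtain e' a where e': "e' \<in> X" "link w e' v = l" and a: "a \<in> X" "link w a v \<noteq> l"
      and "link w e' a \<noteq> l"
      unfolding E_def by blast
    then have "\<not> splittable w {a, y, v, e'}"
      using y link_XY by (intro not_splittable_quadruple[where l = l]) auto
    moreover have "card {a, y, v, e'} = 4"
    proof -
      have "a \<noteq> e'" using a e' by auto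
      moreover have "a \<noteq> y" "e' \<noteq> y" using a e' y disjoint by auto
      moreover have "a \<noteq> v" "e' \<noteq> v" "y \<noteq> v" using a e' y v_notin by auto
      ultimately show ?thesis by simp
    qed
    moreover have "{a, y, v, e'} \<subseteq> V" using a e' y V_eq by blast
    ultimately show ?thesis by blast
  next
    case False
    have "link w x z = l" if x: "x \<in> E" and z: "z \<in> V - E" for x z
    proof -
      consider "z = v" | "z \<in> Y" | "z \<in> X - E" using z V_eq E_def by blast
      then show ?thesis using x False link_XY unfolding E_def by cases auto
    qed
    then have "uniform w E (V - E)" by (rule uniformI)
    moreover have "E \<noteq> {}" "v \<in> V - E" using e V_eq v_notin unfolding E_def by auto
    ultimately have "splittable w V" using V_eq E_def by (intro splittableI[of E]) auto
    with unsplittable show ?thesis ..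
  qed
qed

lemma unsplittable_triple:
  assumes "\<forall>x\<in>X. link w x v \<noteq> l" "\<forall>y\<in>Y. link w v y \<noteq> l"
  shows "\<exists>T\<subseteq>V. \<not> splittable w T \<and> card T = 3"
proof (cases "\<exists>x\<in>X. \<exists>y\<in>Y. link w v x \<noteq> link w v y")
  case True
  then obtain x y where xy: "x \<in> X" "y \<in> Y" "link w v x \<noteq> link w v y" by blast
  then have "\<not> splittable w {x, v, y}"
    using assms link_XY by (intro not_splittable_triple[where l = l]) auto
  moreover have "card {x, v, y} = 3"
  proof -
    have "x \<noteq> y" using xy disjoint by auto
    moreover have "x \<noteq> v" "y \<noteq> v" using xy v_notin by auto
    ultimately show ?thesis by simp
  qed
  moreover have "{x, v, y} \<subseteq> V" using xy V_eq by blast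
  ultimately show ?thesis by blast
next
  case False
  then have same: "link w v x = link w v y" if "x \<in> X" "y \<in> Y" for x y
    using that by blast
  obtain x0 y0 where x0: "x0 \<in> X" and y0: "y0 \<in> Y" using X_nonempty Y_nonempty by blast
  have "link w v z = link w v y0" if "z \<in> V - {v}" for z
  proof -
    from that V_eq consider "z \<in> X" | "z \<in> Y" by blast
    then show ?thesis
    proof cases
      case 1
      then show ?thesis by (rule same[OF _ y0])
    next
      case 2
      then show ?thesis using same[OF x0 2] same[OF x0 y0] by simp
    qed
  qed
  then have "uniform w {v} (V - {v})" by (intro uniformI) auto
  then have "splittable w V"
    using V_eq v_notin X_nonempty by (intro splittableI[of "{v}"]) auto
  with unsplittable show ?thesis ..
qed

lemma unsplittable_small_subset: "\<exists>T\<subseteq>V. \<not> splittable w T \<and> 3 \<le> card T \<and> card T \<le> 4"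
proof -
  have "\<exists>T\<subseteq>V. \<not> splittable w T \<and> (card T = 3 \<or> card T = 4)"
  proof (cases "\<exists>e\<in>X. link w e v = l")
    case True
    then show ?thesis using unsplittable_quadruple by blast
  next
    case no_e: False
    show ?thesis
    proof (cases "\<exists>y\<in>Y. link w v y = l")
      case True
      \<comment> \<open>reversing all arcs swaps the roles of \<open>X\<close> and \<open>Y\<close> and reduces this to the first case\<close>
      then obtain y where "y \<in> Y" "link (\<lambda>x y. w y x) y v = l" by (auto simp: link_def)
      then obtain T where "T \<subseteq> V" "\<not> splittable (\<lambda>x y. w y x) T" "card T = 4"
        using vertex_deletion_split.unsplittable_quadruple[OF transpose] by blast
      then show ?thesis using splittable_transpose[of w T] by blast
    next
      case False
      then show ?thesis using no_e unsplittable_triple by blast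
    qed
  qed
  then show ?thesis by auto
qed

end

lemma unsplittable_small_subset_if_deletion_splittable:
  assumes "\<not> splittable w V" "v \<in> V" "splittable w (V - {v})"
  shows "\<exists>T\<subseteq>V. \<not> splittable w T \<and> 3 \<le> card T \<and> card T \<le> 4"
proof -
  obtain X Y where XY: "X \<noteq> {}" "Y \<noteq> {}" "X \<inter> Y = {}" "X \<union> Y = V - {v}" "uniform w X Y"
    using assms(3) unfolding splittable_def by blast
  then obtain l where l: "\<And>x y. x \<in> X \<Longrightarrow> y \<in> Y \<Longrightarrow> link w x y = l"
    unfolding uniform_def by blast
  have "vertex_deletion_split w V X Y v l"
  proof
    show "V = insert v (X \<union> Y)" using XY(4) assms(2) by blast
    show "v \<notin> X" "v \<notin> Y" using XY(4) by blast+
  qed (use XY l assms(1) in auto)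
  then show ?thesis by (rule vertex_deletion_split.unsplittable_small_subset)
qed

lemma uniform_if_splittable_insert:
  assumes "\<not> splittable w T" "y \<notin> T" "splittable w (insert y T)"
  shows "uniform w {y} T"
proof -
  obtain P Q where PQ: "y \<in> P" "Q \<noteq> {}" "P \<inter> Q = {}" "P \<union> Q = insert y T" "uniform w P Q"
    by (rule splittable_with_side[OF assms(3) insertI1])
  show ?thesis
  proof (cases "T \<inter> P = {}")
    case True
    then have "Q = T" using PQ assms(2) by blast
    then show ?thesis using uniform_mono[OF PQ(5), of "{y}" T] PQ(1) by simp
  next
    case False
    have "T - T \<inter> P = Q" using PQ assms(2) by blast
    moreover have "uniform w (T \<inter> P) Q" using uniform_mono[OF PQ(5), of "T \<inter> P" Q] by simp
    ultimately have "splittable w T"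
      using False PQ(2) by (intro splittableI[of "T \<inter> P"]) auto
    with assms(1) show ?thesis ..
  qed
qed

lemma splittable_if_module_meets_both_sides:
  assumes PQ: "uniform w P Q" "P \<inter> Q = {}" "P \<union> Q = V - {s}"
    and S: "s \<in> S" "S \<subseteq> V" "\<forall>y\<in>V - S. uniform w {y} S"
    and meets: "x \<in> P \<inter> S" "Q - S \<noteq> {}"
  shows "splittable w V"
proof -
  have "uniform w P (Q - S)" using uniform_mono[OF PQ(1)] by blast
  moreover have "\<forall>y\<in>Q - S. uniform w {y} S" using S PQ(3) by blast
  ultimately have "uniform w (P \<union> S) (Q - S)"
    using meets(1) by (intro uniform_Un_module) auto
  moreover have "V - (P \<union> S) = Q - S" using PQ S by blast
  ultimately show ?thesis
    using PQ S meets by (intro splittableI[of "P \<union> S"]) auto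
qed

lemma not_splittable_delete_from_module:
  assumes unsplittable: "\<not> splittable w V"
    and S: "S \<subseteq> V" "S \<noteq> V" "\<forall>y\<in>V - S. uniform w {y} S"
    and s: "s \<in> S" "s' \<in> S" "s' \<noteq> s"
  shows "\<not> splittable w (V - {s})"
proof
  assume split: "splittable w (V - {s})"
  have "s' \<in> V - {s}" using s S(1) by blast
  then obtain P Q where PQ: "s' \<in> P" "Q \<noteq> {}" "P \<inter> Q = {}" "P \<union> Q = V - {s}" "uniform w P Q"
    by (rule splittable_with_side[OF split])
  have "splittable w V"
  proof (cases "Q - S = {}")
    case True
    then obtain q where "q \<in> Q \<inter> S" using PQ(2) by blast
    moreover have "P - S \<noteq> {}" using True PQ S s by blast
    moreover have "uniform w Q P" using PQ(5) by (rule uniform_sym[THEN iffD1])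
    ultimately show ?thesis
      using PQ S s by (intro splittable_if_module_meets_both_sides[of w Q P V s S q]) auto
  next
    case False
    then show ?thesis
      using PQ S s by (intro splittable_if_module_meets_both_sides[of w P Q V s S s']) auto
  qed
  with unsplittable show False ..
qed

lemma unsplittable_deletion_if_unsplittable_subset:
  assumes "finite V" "\<not> splittable w V" "T \<subseteq> V" "T \<noteq> V" "\<not> splittable w T" "2 \<le> card T"
  shows "\<exists>v\<in>V. \<not> splittable w (V - {v})"
  using assms(3-6)
proof (induction "card (V - T)" arbitrary: T rule: less_induct)
  case less
  show ?case
  proof (cases "\<exists>y\<in>V - T. \<not> splittable w (insert y T)")
    case True
    then obtain y where y: "y \<in> V - T" "\<not> splittable w (insert y T)" by blast
    show ?thesis
    proof (cases "insert y T = V")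
      case True
      then have "V - {y} = T" using y by auto
      then show ?thesis using y less.prems(3) by auto
    next
      case False
      have "card (V - insert y T) < card (V - T)"
        using y assms(1) by (metis Diff_insert card_Diff1_less finite_Diff)
      moreover have "2 \<le> card (insert y T)"
        using less.prems(1,4) y assms(1) by (simp add: finite_subset)
      ultimately show ?thesis
        using less.hyps y less.prems(1) False by blast
    qed
  next
    case False
    then have "\<forall>y\<in>V - T. uniform w {y} T"
      using less.prems(3) by (blast intro: uniform_if_splittable_insert)
    moreover obtain s s' where "s \<in> T" "s' \<in> T" "s' \<noteq> s"
    proof -
      obtain T2 where "T2 \<subseteq> T" "card T2 = 2" by (rule obtain_subset_with_card_n[OF less.prems(4)])
      then show thesis using that unfolding card_2_iff by blast
    qed
    ultimately show ?thesis
      using not_splittable_delete_from_module[OF assms(2) less.prems(1,2)] less.prems(1) by blast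
  qed
qed

lemma exists_unsplittable_vertex_deletion:
  assumes "finite V" "5 \<le> card V" "\<not> splittable w V"
  shows "\<exists>v\<in>V. \<not> splittable w (V - {v})"
proof -
  have "V \<noteq> {}" using assms(2) by auto
  then obtain v where v: "v \<in> V" by blast
  show ?thesis
  proof (cases "splittable w (V - {v})")
    case True
    then obtain T where T: "T \<subseteq> V" "\<not> splittable w T" "3 \<le> card T" "card T \<le> 4"
      using unsplittable_small_subset_if_deletion_splittable[OF assms(3) v] by blast
    have "T \<noteq> V" using T(4) assms(2) by auto
    moreover have "2 \<le> card T" using T(3) by simp
    ultimately show ?thesis
      using unsplittable_deletion_if_unsplittable_subset[OF assms(1,3) T(1) _ T(2)] by blast
  qed (use v in blast)
qed

theorem theorem3p3:
  fixes V :: "'a set" and w :: "'a \<Rightarrow> 'a \<Rightarrow> real"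
  assumes "wog V w" and "inseparable V w" and "card V \<ge> 5"
  shows "\<exists>v \<in> V. inseparable (V - {v}) (induced (V - {v}) w)"
proof -
  have fin: "finite V" and antisym: "\<And>x y. w x y \<noteq> 0 \<Longrightarrow> w y x = 0"
    using assms(1) unfolding wog_def by blast+
  have "separable V w \<longleftrightarrow> splittable w V"
    using antisym by (rule separable_iff_splittable)
  then have "\<not> splittable w V" using assms(2) unfolding inseparable_def by blast
  then obtain v where v: "v \<in> V" "\<not> splittable w (V - {v})"
    using exists_unsplittable_vertex_deletion[OF fin assms(3)] by blast
  have "\<And>x y. induced (V - {v}) w x y \<noteq> 0 \<Longrightarrow> induced (V - {v}) w y x = 0"
    unfolding induced_def using antisym by (auto split: if_splits)
  then have "separable (V - {v}) (induced (V - {v}) w) \<longleftrightarrow> splittable (induced (V - {v}) w) (V - {v})"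
    by (rule separable_iff_splittable)
  also have "\<dots> \<longleftrightarrow> splittable w (V - {v})"
    by (rule splittable_induced)
  finally show ?thesis using v unfolding inseparable_def by blast
qed

end
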